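(* Consider a two-player quantum zero-sum game as described in the context, and run the Optimistic Matrix Mirror Prox (OMMP) method with a regularizer $h$ that is $\mu$-strongly convex with respect to a norm $\|\cdot\|$ on the joint space, and with constant step size $\eta=\mu/(2\gamma)$, where $\gamma$ is a Lipschitz constant of the game operator $F$ with respect to $(\|\cdot\|,\|\cdot\|_* )$, i.e. $\|F(Z)-F(Z')\|_*\le\gamma\|Z-Z'\|$ for all joint states $Z,Z'$. Then the average iterate $\bar\Psi_N=\frac1N\sum_{t}\Psi_t$ of OMMP is an $\epsilon$-Nash equilibrium after $N=O_d(1/\epsilon)$ iterations, where the constant hidden in $O_d(\cdot)$ depends on the dimensions of the game (and on $h$) but not on $\epsilon$.
   Context: Game: Alice prepares an $n$-qubit mixed state $\alpha\in\mathcal{A}=\{\alpha\in\mathbb{C}^{2^n\times 2^n}:\alpha\succeq 0,\ \operatorname{Tr}\alpha=1\}$ and Bob an $m$-qubit mixed state $\beta\in\mathcal{B}=\{\beta\in\mathbb{C}^{2^m\times 2^m}:\beta\succeq0,\ \operatorname{Tr}\beta=1\}$ (no shared entanglement). A referee performs a POVM $\{P_\omega\}_{\omega\in\Omega}$ on $n+m$ qubits with finite outcome set $\Omega$, and $u:\Omega\to[-1,1]$ is Alice's utility. The payoff observable is $U=\sum_{\omega}u(\omega)P_\omega$ and Alice's expected payoff is $u(\alpha,\beta)=\operatorname{Tr}[U(\alpha\otimes\beta)]$; Alice maximizes it and Bob minimizes it. Joint states are pairs $\Psi=(\alpha,\beta)\in\mathcal{C}=\mathcal{A}\oplus\mathcal{B}$,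 with inner product $\langle(A_1,B_1),(A_2,B_2)\rangle=\operatorname{Tr}(A_1A_2)+\operatorname{Tr}(B_1B_2)$. The game operator is $F(\alpha,\beta)=(F_{\mathcal A}(\beta),F_{\mathcal B}(\alpha))$ with $F_{\mathcal A}(\beta)=\operatorname{Tr}_{\mathcal B}[U^\dagger(I\otimes\beta)]$ and $F_{\mathcal B}(\alpha)=-\operatorname{Tr}_{\mathcal A}[U^\dagger(\alpha\otimes I)]$ (partial traces). A joint state $(\alpha',\beta')$ is an $\epsilon$-Nash equilibrium if its duality gap $\max_{\alpha\in\mathcal A}u(\alpha,\beta')-\min_{\beta\in\mathcal B}u(\alpha',\beta)$ is at most $\epsilon$. Regularizer and Bregman divergence: $h$ is a differentiable strongly convex function on each player's spectraplex (applied blockwise on $\mathcal C$), and $D_h(X\|Y)=h(X)-h(Y)-\langle X-Y,\nabla h(Y)\rangle$. The proximal map is $P^{h,\eta}(X,Y)=\arg\max_{C}\{\langle Y,C-X\rangle-\frac1\eta D_h(C\|X)\}$, taken separately over $\mathcal A$ and over $\mathcal B$ for each player's block. OMMP: initialize $\Psi_0=\hat\Psi_0=(I/2^n,I/2^m)$; for $t=0,1,2,\dots$ set $\Psi_{t+1}=P^{h,\eta}(\hat\Psi_t,F(\Psi_t))$ and $\hat\Psi_{t+1}=P^{h,\eta}(\hat\Psi_t,F(\Psi_{t+1}))$ (each player updating its own block with its own component of $F$); after $N$ rounds output the average $\bar\Psi_N=\frac1N\sum_{t=0}^{N-1}\Psi_t$. *)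

theory Defs
  imports "HOL-Analysis.Analysis"
begin

text \<open>Complex square matrices indexed by a finite type; a register of n qubits is
  modelled by an index type 'a with CARD('a) = 2^n.\<close>

type_synonym 'n cmat = "complex ^'n ^'n"

definition adj :: "'n::finite cmat \<Rightarrow> 'n cmat" where
  "adj A = (\<chi> i j. cnj (A $ j $ i))"

definition hermitian :: "'n::finite cmat \<Rightarrow> bool" where
  "hermitian A \<longleftrightarrow> adj A = A"

definition psd :: "'n::finite cmat \<Rightarrow> bool" where
  "psd A \<longleftrightarrow> hermitian A \<and>
     (\<forall>v :: complex ^'n. 0 \<le> Re (\<Sum>i\<in>UNIV. \<Sum>j\<in>UNIV. cnj (v $ i) * A $ i $ j * v $ j))"

definition spectraplex :: "'n::finite cmat set" where
  "spectraplex = {A. psd A \<and> trace A = 1}"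

definition kron :: "'a::finite cmat \<Rightarrow> 'b::finite cmat \<Rightarrow> ('a \<times> 'b) cmat" where
  "kron A B = (\<chi> p q. A $ fst p $ fst q * B $ snd p $ snd q)"

definition ptrace_B :: "('a::finite \<times> 'b::finite) cmat \<Rightarrow> 'a cmat" where
  "ptrace_B X = (\<chi> i k. \<Sum>j\<in>UNIV. X $ (i, j) $ (k, j))"

definition ptrace_A :: "('a::finite \<times> 'b::finite) cmat \<Rightarrow> 'b cmat" where
  "ptrace_A X = (\<chi> j l. \<Sum>i\<in>UNIV. X $ (i, j) $ (i, l))"

definition is_povm :: "('w::finite \<Rightarrow> ('n::finite) cmat) \<Rightarrow> bool" where
  "is_povm P \<longleftrightarrow> (\<forall>w. psd (P w)) \<and> (\<Sum>w\<in>UNIV. P w) = mat 1"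

definition payoff_obs :: "('w::finite \<Rightarrow> ('n::finite) cmat) \<Rightarrow> ('w \<Rightarrow> real) \<Rightarrow> 'n cmat" where
  "payoff_obs P u = (\<Sum>w\<in>UNIV. u w *\<^sub>R P w)"

text \<open>Expected payoff Tr[U (alpha tensor beta)] (real for Hermitian U; Re is taken).\<close>
definition payoff :: "('a::finite \<times> 'b::finite) cmat \<Rightarrow> 'a cmat \<Rightarrow> 'b cmat \<Rightarrow> real" where
  "payoff U al be = Re (trace (U ** kron al be))"

definition joint_states :: "('a::finite cmat \<times> 'b::finite cmat) set" where
  "joint_states = spectraplex \<times> spectraplex"

definition herm_pairs :: "('a::finite cmat \<times> 'b::finite cmat) set" where
  "herm_pairs = {Z. hermitian (fst Z) \<and> hermitian (snd Z)}"

definition ip :: "('a::finite cmat \<times> 'b::finite cmat) \<Rightarrow> ('a cmat \<times> 'b cmat) \<Rightarrow> real" where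
  "ip X Y = Re (trace (fst X ** fst Y)) + Re (trace (snd X ** snd Y))"

definition game_op :: "('a::finite \<times> 'b::finite) cmat \<Rightarrow> ('a cmat \<times> 'b cmat) \<Rightarrow> ('a cmat \<times> 'b cmat)" where
  "game_op U Z = (ptrace_B (adj U ** kron (mat 1) (snd Z)),
                  - ptrace_A (adj U ** kron (fst Z) (mat 1)))"

definition is_norm_on :: "('v::real_vector \<Rightarrow> real) \<Rightarrow> 'v set \<Rightarrow> bool" where
  "is_norm_on nrm V \<longleftrightarrow>
     (\<forall>x\<in>V. 0 \<le> nrm x \<and> (nrm x = 0 \<longleftrightarrow> x = 0)) \<and>
     (\<forall>x\<in>V. \<forall>c::real. nrm (c *\<^sub>R x) = \<bar>c\<bar> * nrm x) \<and>
     (\<forall>x\<in>V. \<forall>y\<in>V. nrm (x + y) \<le> nrm x + nrm y)"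

definition dual_norm :: "(('a::finite cmat \<times> 'b::finite cmat) \<Rightarrow> real) \<Rightarrow> ('a cmat \<times> 'b cmat) \<Rightarrow> real" where
  "dual_norm nrm Y = (SUP X\<in>{X\<in>herm_pairs. nrm X \<le> 1}. ip Y X)"

definition reg :: "('a::finite cmat \<Rightarrow> real) \<Rightarrow> ('b::finite cmat \<Rightarrow> real) \<Rightarrow> ('a cmat \<times> 'b cmat) \<Rightarrow> real" where
  "reg hA hB Z = hA (fst Z) + hB (snd Z)"

definition reg_grad :: "('a::finite cmat \<Rightarrow> 'a cmat) \<Rightarrow> ('b::finite cmat \<Rightarrow> 'b cmat) \<Rightarrow> ('a cmat \<times> 'b cmat) \<Rightarrow> ('a cmat \<times> 'b cmat)" where
  "reg_grad gA gB Z = (gA (fst Z), gB (snd Z))"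

definition diff_with_grad :: "('n::finite cmat \<Rightarrow> real) \<Rightarrow> ('n cmat \<Rightarrow> 'n cmat) \<Rightarrow> bool" where
  "diff_with_grad h g \<longleftrightarrow> (\<forall>Y\<in>spectraplex. hermitian (g Y) \<and>
      (h has_derivative (\<lambda>H. Re (trace (H ** g Y)))) (at Y within spectraplex))"

definition strongly_convex_wrt ::
  "(('a::finite cmat \<times> 'b::finite cmat) \<Rightarrow> real) \<Rightarrow> (('a cmat \<times> 'b cmat) \<Rightarrow> ('a cmat \<times> 'b cmat))
    \<Rightarrow> (('a cmat \<times> 'b cmat) \<Rightarrow> real) \<Rightarrow> real \<Rightarrow> bool" where
  "strongly_convex_wrt h gh nrm \<mu> \<longleftrightarrow>
     (\<forall>X\<in>joint_states. \<forall>Y\<in>joint_states.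
        h X \<ge> h Y + ip (X - Y) (gh Y) + \<mu> / 2 * (nrm (X - Y))\<^sup>2)"

definition bregman :: "('n::finite cmat \<Rightarrow> real) \<Rightarrow> ('n cmat \<Rightarrow> 'n cmat) \<Rightarrow> 'n cmat \<Rightarrow> 'n cmat \<Rightarrow> real" where
  "bregman h g X Y = h X - h Y - Re (trace ((X - Y) ** g Y))"

definition prox1 :: "('n::finite cmat \<Rightarrow> real) \<Rightarrow> ('n cmat \<Rightarrow> 'n cmat) \<Rightarrow> real \<Rightarrow> 'n cmat \<Rightarrow> 'n cmat \<Rightarrow> 'n cmat" where
  "prox1 h g \<eta> X Y = arg_max (\<lambda>C. Re (trace (Y ** (C - X))) - (1 / \<eta>) * bregman h g C X) (\<lambda>C. C \<in> spectraplex)"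

definition prox :: "('a::finite cmat \<Rightarrow> real) \<Rightarrow> ('a cmat \<Rightarrow> 'a cmat) \<Rightarrow> ('b::finite cmat \<Rightarrow> real) \<Rightarrow> ('b cmat \<Rightarrow> 'b cmat)
    \<Rightarrow> real \<Rightarrow> ('a cmat \<times> 'b cmat) \<Rightarrow> ('a cmat \<times> 'b cmat) \<Rightarrow> ('a cmat \<times> 'b cmat)" where
  "prox hA gA hB gB \<eta> X Y = (prox1 hA gA \<eta> (fst X) (fst Y), prox1 hB gB \<eta> (snd X) (snd Y))"

text \<open>OMMP iterates: ommp ... t = (Psi_t, hatPsi_t).\<close>
fun ommp :: "('a::finite \<times> 'b::finite) cmat \<Rightarrow> ('a cmat \<Rightarrow> real) \<Rightarrow> ('a cmat \<Rightarrow> 'a cmat)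
    \<Rightarrow> ('b cmat \<Rightarrow> real) \<Rightarrow> ('b cmat \<Rightarrow> 'b cmat) \<Rightarrow> real \<Rightarrow> nat
    \<Rightarrow> ('a cmat \<times> 'b cmat) \<times> ('a cmat \<times> 'b cmat)" where
  "ommp U hA gA hB gB \<eta> 0 =
     (((1 / real CARD('a)) *\<^sub>R mat 1, (1 / real CARD('b)) *\<^sub>R mat 1),
      ((1 / real CARD('a)) *\<^sub>R mat 1, (1 / real CARD('b)) *\<^sub>R mat 1))"
| "ommp U hA gA hB gB \<eta> (Suc t) =
     (let (Psi, Psih) = ommp U hA gA hB gB \<eta> t;
          Psi' = prox hA gA hB gB \<eta> Psih (game_op U Psi);
          Psih' = prox hA gA hB gB \<eta> Psih (game_op U Psi')
      in (Psi', Psih'))"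

definition ommp_avg :: "('a::finite \<times> 'b::finite) cmat \<Rightarrow> ('a cmat \<Rightarrow> real) \<Rightarrow> ('a cmat \<Rightarrow> 'a cmat)
    \<Rightarrow> ('b cmat \<Rightarrow> real) \<Rightarrow> ('b cmat \<Rightarrow> 'b cmat) \<Rightarrow> real \<Rightarrow> nat \<Rightarrow> ('a cmat \<times> 'b cmat)" where
  "ommp_avg U hA gA hB gB \<eta> N = (1 / real N) *\<^sub>R (\<Sum>t<N. fst (ommp U hA gA hB gB \<eta> t))"

definition duality_gap :: "('a::finite \<times> 'b::finite) cmat \<Rightarrow> ('a cmat \<times> 'b cmat) \<Rightarrow> real" where
  "duality_gap U Z = (SUP al\<in>spectraplex. payoff U al (snd Z)) - (INF be\<in>spectraplex. payoff U (fst Z) be)"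

definition is_eps_nash :: "('a::finite \<times> 'b::finite) cmat \<Rightarrow> real \<Rightarrow> ('a cmat \<times> 'b cmat) \<Rightarrow> bool" where
  "is_eps_nash U \<epsilon> Z \<longleftrightarrow> Z \<in> joint_states \<and> duality_gap U Z \<le> \<epsilon>"

end

(*
  Each prox step is characterised by its first-order optimality condition on the
  (compact, convex) spectraplex. Within one round the two prox steps start from the same centre
  Psi_hat_t; combining their optimality conditions with the three-point identity of the Bregman
  divergence, mu-strong convexity of h and the gamma-Lipschitz bound on F, the step size
  eta = mu / (2 gamma) makes the extrapolation error at most mu/4 ||Psi_{t+1} - Psi_t||^2, whence

    eta <F(Psi_{t+1}), Z - Psi_{t+1}>  <=  Phi_t(Z) - Phi_{t+1}(Z),
    Phi_t(Z) = D_h(Z || Psi_hat_t) + mu/2 ||Psi_hat_t - Psi_t||^2.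

  Telescoping bounds sum_{t<N} <F(Psi_t), Z - Psi_t> by a constant independent of N and of the
  joint state Z (by compactness). Since <F(P), Z - P> = u(alpha_Z, beta_P) - u(alpha_P, beta_Z) is
  bilinear in the strategies, dividing by N bounds the duality gap of the average iterate by C/N.
*)
theory Submission
  imports Defs
begin

section \<open>Matrices and the trace inner product\<close>

lemma Re_trace_mult_eq_inner_adj: "Re (trace (A ** B)) = inner A (adj B)"
  for A B :: "'n::finite cmat"
  by (simp add: trace_def matrix_matrix_mult_def adj_def inner_vec_def inner_complex_def Re_sum)

lemma hermitian_Re_trace_mult: "hermitian B \<Longrightarrow> Re (trace (A ** B)) = inner A B"
  by (simp add: Re_trace_mult_eq_inner_adj hermitian_def)

lemma adj_adj [simp]: "adj (adj A) = A"
  by (simp add: adj_def vec_eq_iff)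

lemma adj_add: "adj (A + B) = adj A + adj B"
  and adj_diff: "adj (A - B) = adj A - adj B"
  and adj_scaleR: "adj (c *\<^sub>R A) = c *\<^sub>R adj A"
  and adj_0: "adj 0 = 0"
  by (simp_all add: adj_def vec_eq_iff)

lemma inner_adj_adj: "inner (adj A) (adj B) = inner A B"
  for A B :: "'n::finite cmat"
proof -
  have "inner (adj A) (adj B) = (\<Sum>i\<in>UNIV. \<Sum>j\<in>UNIV. inner (A $ j $ i) (B $ j $ i))"
    by (simp add: adj_def inner_vec_def inner_complex_def)
  also have "\<dots> = inner A B"
    by (subst sum.swap) (simp add: inner_vec_def)
  finally show ?thesis .
qed

lemma hermitian_add: "hermitian A \<Longrightarrow> hermitian B \<Longrightarrow> hermitian (A + B)"
  and hermitian_diff: "hermitian A \<Longrightarrow> hermitian B \<Longrightarrow> hermitian (A - B)"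
  and hermitian_scaleR: "hermitian A \<Longrightarrow> hermitian (c *\<^sub>R A)"
  and hermitian_0: "hermitian 0"
  by (simp_all add: hermitian_def adj_add adj_diff adj_scaleR adj_0)

lemma sum_UNIV_prod:
  "(\<Sum>p\<in>UNIV. f p) = (\<Sum>a\<in>UNIV. \<Sum>b\<in>UNIV. f (a, b))"
  for f :: "'a::finite \<times> 'b::finite \<Rightarrow> 'c::comm_monoid_add"
  by (simp add: sum.cartesian_product)

lemma kron_mult: "kron A B ** kron C D = kron (A ** C) (B ** D)"
  by (simp add: kron_def matrix_matrix_mult_def vec_eq_iff sum_UNIV_prod sum_product mult_ac)

lemma hermitian_kron: "hermitian A \<Longrightarrow> hermitian B \<Longrightarrow> hermitian (kron A B)"
  unfolding hermitian_def adj_def kron_def by (simp add: vec_eq_iff)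

lemma trace_ptrace_B_mult: "trace (ptrace_B X ** A) = trace (X ** kron A (mat 1))"
  by (simp add: trace_def matrix_matrix_mult_def ptrace_B_def kron_def mat_def sum_UNIV_prod
      sum_distrib_right if_distrib cong: if_cong)
    (rule sum.cong[OF refl], rule sum.swap)

section \<open>The spectraplex\<close>

definition sesq_form :: "'n::finite cmat \<Rightarrow> complex ^'n \<Rightarrow> complex ^'n \<Rightarrow> complex" where
  "sesq_form A x y = (\<Sum>i\<in>UNIV. \<Sum>j\<in>UNIV. cnj (x $ i) * A $ i $ j * y $ j)"

lemma psd_iff_sesq_form: "psd A \<longleftrightarrow> hermitian A \<and> (\<forall>v. 0 \<le> Re (sesq_form A v v))"
  by (simp add: psd_def sesq_form_def)

lemma sesq_form_add_left: "sesq_form A (x + y) z = sesq_form A x z + sesq_form A y z"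
  and sesq_form_add_right: "sesq_form A z (x + y) = sesq_form A z x + sesq_form A z y"
  and sesq_form_scale_left: "sesq_form A (c *s x) z = cnj c * sesq_form A x z"
  and sesq_form_scale_right: "sesq_form A z (c *s x) = c * sesq_form A z x"
  by (simp_all add: sesq_form_def algebra_simps sum.distrib sum_distrib_left)

lemma sesq_form_axis: "sesq_form A (axis i 1) (axis j 1) = A $ i $ j"
  by (simp add: sesq_form_def axis_def if_distrib[of cnj] if_distrib[of "\<lambda>x. x * _"]
      if_distrib[of "(*) _"] cong: if_cong)

lemma sesq_form_convex_comb:
  "sesq_form (u *\<^sub>R A + v *\<^sub>R B) x x = of_real u * sesq_form A x x + of_real v * sesq_form B x x"
  by (simp add: sesq_form_def scaleR_conv_of_real[where 'a=complex] algebra_simps sum.distrib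
      sum_distrib_left)

lemma psd_diag_nonneg: "psd A \<Longrightarrow> 0 \<le> Re (A $ i $ i)"
  using sesq_form_axis[of A i i] by (metis psd_iff_sesq_form)

lemma hermitian_entry_swap: "hermitian A \<Longrightarrow> A $ j $ i = cnj (A $ i $ j)"
  unfolding hermitian_def adj_def by (metis vec_lambda_beta)

lemma psd_offdiag_bound:
  assumes "psd A" and "i \<noteq> j"
  shows "2 * cmod (A $ i $ j) \<le> Re (A $ i $ i) + Re (A $ j $ j)"
proof (cases "A $ i $ j = 0")
  case True
  then show ?thesis
    using psd_diag_nonneg[OF assms(1), of i] psd_diag_nonneg[OF assms(1), of j] by simp
next
  case False
  define z where "z = A $ i $ j"
  define c where "c = - cnj z / complex_of_real (cmod z)"
  have zz: "z * cnj z = complex_of_real (cmod z) * complex_of_real (cmod z)"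
    by (subst complex_norm_square[symmetric]) (simp add: power2_eq_square)
  have cz: "c * z = - complex_of_real (cmod z)" and cc: "cnj c * c = 1"
    using False zz by (simp_all add: c_def z_def field_simps)
  \<comment> \<open>With this phase the cross terms of the test vector sum to \<open>-2 |z|\<close>.\<close>
  define v where "v = axis i 1 + c *s axis j (1::complex)"
  have "A $ j $ i = cnj z"
    using assms(1) hermitian_entry_swap[of A i j] by (simp add: z_def psd_def)
  then have "sesq_form A v v = A $ i $ i + c * z + cnj (c * z) + cnj c * c * A $ j $ j"
    unfolding v_def
    by (simp only: sesq_form_add_left sesq_form_add_right sesq_form_scale_left
        sesq_form_scale_right sesq_form_axis z_def complex_cnj_mult)
      (simp add: algebra_simps)
  also have "\<dots> = A $ i $ i - 2 * complex_of_real (cmod z) + A $ j $ j"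
    by (simp add: cz cc)
  finally have "Re (sesq_form A v v) = Re (A $ i $ i) - 2 * cmod z + Re (A $ j $ j)"
    by simp
  moreover have "0 \<le> Re (sesq_form A v v)"
    using assms(1) by (simp add: psd_iff_sesq_form)
  ultimately show ?thesis by (simp add: z_def)
qed

lemma spectraplex_hermitian: "A \<in> spectraplex \<Longrightarrow> hermitian A"
  by (simp add: spectraplex_def psd_def)

lemma spectraplex_entry_bound:
  assumes "A \<in> spectraplex"
  shows "cmod (A $ i $ j) \<le> 1"
proof -
  have psd: "psd A" and "Re (trace A) = 1"
    using assms by (simp_all add: spectraplex_def)
  then have trace: "(\<Sum>k\<in>UNIV. Re (A $ k $ k)) = 1"
    by (simp add: trace_def)
  have diag_le: "Re (A $ k $ k) \<le> 1" for k
    using member_le_sum[of k UNIV "\<lambda>k. Re (A $ k $ k)"] psd_diag_nonneg[OF psd] trace by simp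
  show ?thesis
  proof (cases "i = j")
    case True
    have "Im (A $ i $ i) = 0"
      using hermitian_entry_swap[of A i i] psd by (simp add: psd_def complex_eq_iff)
    then show ?thesis
      using True diag_le[of i] psd_diag_nonneg[OF psd, of i] by (simp add: cmod_eq_Re)
  next
    case False
    then show ?thesis
      using psd_offdiag_bound[OF psd False] diag_le[of i] diag_le[of j] by simp
  qed
qed

lemma trace_scaleR: "trace (c *\<^sub>R A) = of_real c * trace A"
  for A :: "'n::finite cmat"
  by (simp add: trace_def sum_distrib_left scaleR_conv_of_real[where 'a=complex])

lemma convex_spectraplex: "convex (spectraplex :: 'n::finite cmat set)"
proof (rule convexI)
  fix A B :: "'n cmat" and u v :: real
  assume A: "A \<in> spectraplex" and B: "B \<in> spectraplex" and "0 \<le> u" "0 \<le> v" "u + v = 1"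
  moreover have "0 \<le> Re (sesq_form A x x)" "0 \<le> Re (sesq_form B x x)" for x
    using A B by (auto simp: spectraplex_def psd_iff_sesq_form)
  ultimately show "u *\<^sub>R A + v *\<^sub>R B \<in> spectraplex"
    by (auto simp: spectraplex_def psd_iff_sesq_form sesq_form_convex_comb trace_add trace_scaleR
        hermitian_add hermitian_scaleR simp flip: of_real_add)
qed

lemma closed_spectraplex: "closed (spectraplex :: 'n::finite cmat set)"
proof -
  have eq: "spectraplex = {A::'n cmat. adj A = A} \<inter> (\<Inter>v. {A. 0 \<le> Re (sesq_form A v v)})
      \<inter> {A. trace A = 1}"
    by (auto simp: spectraplex_def psd_iff_sesq_form hermitian_def)
  have "closed {A::'n cmat. adj A = A}"
    unfolding adj_def by (intro closed_Collect_eq continuous_intros)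
  moreover have "closed {A::'n cmat. 0 \<le> Re (sesq_form A v v)}" for v
    unfolding sesq_form_def by (intro closed_Collect_le continuous_intros)
  moreover have "closed {A::'n cmat. trace A = 1}"
    unfolding trace_def by (intro closed_Collect_eq continuous_intros)
  ultimately show ?thesis
    unfolding eq by (intro closed_Int closed_INT) auto
qed

lemma bounded_spectraplex: "bounded (spectraplex :: 'n::finite cmat set)"
proof -
  have "norm A \<le> real CARD('n) * real CARD('n)" if "A \<in> spectraplex" for A :: "'n cmat"
  proof -
    have "norm A \<le> (\<Sum>i\<in>UNIV. norm (A $ i))"
      by (simp add: norm_vec_def L2_set_le_sum)
    also have "\<dots> \<le> (\<Sum>i\<in>UNIV. \<Sum>j\<in>UNIV. norm (A $ i $ j))"
      by (intro sum_mono) (simp add: norm_vec_def L2_set_le_sum)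
    also have "\<dots> \<le> (\<Sum>i\<in>(UNIV::'n set). \<Sum>j\<in>(UNIV::'n set). 1)"
      by (intro sum_mono spectraplex_entry_bound that)
    finally show ?thesis by simp
  qed
  then show ?thesis
    unfolding bounded_iff by blast
qed

lemma compact_spectraplex: "compact (spectraplex :: 'n::finite cmat set)"
  by (simp add: compact_eq_bounded_closed bounded_spectraplex closed_spectraplex)

lemma psd_mat_1: "psd (mat 1 :: 'n::finite cmat)"
  unfolding psd_iff_sesq_form
proof (intro conjI allI)
  show "hermitian (mat 1 :: 'n cmat)"
    by (simp add: hermitian_def adj_def mat_def vec_eq_iff)
  fix v :: "complex ^'n"
  have "cnj (v $ i) * (mat 1 :: 'n cmat) $ i $ j * v $ j = (if j = i then cnj (v $ i) * v $ i else 0)"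
    for i j
    by (simp add: mat_def)
  then have "Re (sesq_form (mat 1 :: 'n cmat) v v) = (\<Sum>i\<in>UNIV. Re (cnj (v $ i) * v $ i))"
    by (simp add: sesq_form_def)
  also have "\<dots> \<ge> 0"
    by (intro sum_nonneg) (simp add: mult.commute[of "cnj _"] complex_mult_cnj)
  finally show "0 \<le> Re (sesq_form (mat 1 :: 'n cmat) v v)" .
qed

lemma psd_scaleR: "psd A \<Longrightarrow> 0 \<le> c \<Longrightarrow> psd (c *\<^sub>R A)"
  using sesq_form_convex_comb[of c A 0 0] by (simp add: psd_iff_sesq_form hermitian_scaleR)

lemma maximally_mixed_in_spectraplex:
  "(1 / real CARD('n)) *\<^sub>R (mat 1 :: 'n::finite cmat) \<in> spectraplex"
  by (simp add: spectraplex_def psd_scaleR psd_mat_1 trace_scaleR trace_I)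

section \<open>Proximal maps\<close>

lemma compact_arg_max:
  fixes f :: "'a::topological_space \<Rightarrow> real"
  assumes "compact S" "S \<noteq> {}" "continuous_on S f"
  shows "arg_max f (\<lambda>x. x \<in> S) \<in> S" and "y \<in> S \<Longrightarrow> f y \<le> f (arg_max f (\<lambda>x. x \<in> S))"
proof -
  obtain z where "z \<in> S" "\<forall>y\<in>S. f y \<le> f z"
    using continuous_attains_sup[OF assms] by blast
  then have "is_arg_max f (\<lambda>x. x \<in> S) z"
    by (simp add: is_arg_max_linorder)
  then have "is_arg_max f (\<lambda>x. x \<in> S) (arg_max f (\<lambda>x. x \<in> S))"
    unfolding arg_max_def by (rule someI)
  then show "arg_max f (\<lambda>x. x \<in> S) \<in> S" and "y \<in> S \<Longrightarrow> f y \<le> f (arg_max f (\<lambda>x. x \<in> S))"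
    by (simp_all add: is_arg_max_linorder)
qed

lemma convex_max_derivative_nonpos:
  fixes f :: "'a::real_normed_vector \<Rightarrow> real"
  assumes "convex S" "z \<in> S" "x \<in> S" and max: "\<And>y. y \<in> S \<Longrightarrow> f y \<le> f z"
    and deriv: "(f has_derivative f') (at z within S)"
  shows "f' (x - z) \<le> 0"
proof -
  define p where "p s = z + s *\<^sub>R (x - z)" for s :: real
  have p_in: "p s \<in> S" if "s \<in> {0..1}" for s
  proof -
    have "p s = (1 - s) *\<^sub>R z + s *\<^sub>R x"
      by (simp add: p_def algebra_simps)
    then show ?thesis
      using that assms(1-3) by (simp add: convex_alt)
  qed
  have "(p has_derivative (\<lambda>s. s *\<^sub>R (x - z))) (at 0 within {0..1})"
    unfolding p_def by (auto intro!: derivative_eq_intros)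
  moreover have "p ` {0..1} \<subseteq> S"
    using p_in by blast
  then have "(f has_derivative f') (at (p 0) within p ` {0..1})"
    using has_derivative_subset[OF deriv] by (simp add: p_def)
  ultimately have "((f \<circ> p) has_derivative (\<lambda>s. f' (s *\<^sub>R (x - z)))) (at 0 within {0..1})"
    unfolding o_def[of f' "\<lambda>s. s *\<^sub>R (x - z)", symmetric] by (rule diff_chain_within)
  moreover have "(\<lambda>s. f' (s *\<^sub>R (x - z))) = (*) (f' (x - z))"
    using has_derivative_linear[OF deriv] by (simp add: linear_scale fun_eq_iff)
  ultimately have "((f \<circ> p) has_field_derivative f' (x - z)) (at 0 within {0..1})"
    unfolding has_field_derivative_def by simp
  then have "((\<lambda>s. (f (p s) - f (p 0)) / (s - 0)) \<longlongrightarrow> f' (x - z)) (at_right 0)"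
    by (simp add: has_field_derivative_iff at_within_Icc_at_right)
  moreover have "\<forall>\<^sub>F s in at_right 0. (f (p s) - f (p 0)) / (s - 0) \<le> (0::real)"
    using eventually_at_right_real[OF zero_less_one]
    by eventually_elim (use max p_in in \<open>auto simp: p_def divide_nonpos_pos\<close>)
  ultimately show ?thesis
    by (rule tendsto_upperbound) simp
qed

lemma diff_with_grad_continuous_on: "diff_with_grad h g \<Longrightarrow> continuous_on spectraplex h"
  unfolding diff_with_grad_def by (rule has_derivative_continuous_on) blast

lemma
  fixes h :: "'n::finite cmat \<Rightarrow> real"
  assumes dg: "diff_with_grad h g" and "\<eta> > 0" and X: "X \<in> spectraplex"
  shows prox1_in_spectraplex: "prox1 h g \<eta> X Y \<in> spectraplex"
    and prox1_variational_inequality: "C \<in> spectraplex \<Longrightarrow>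
      \<eta> * Re (trace (Y ** (C - prox1 h g \<eta> X Y)))
        \<le> inner (C - prox1 h g \<eta> X Y) (g (prox1 h g \<eta> X Y) - g X)"
proof -
  define \<phi> where "\<phi> = (\<lambda>C. inner (C - X) (adj Y) - (1 / \<eta>) * (h C - h X - inner (C - X) (adj (g X))))"
  define Z where "Z = prox1 h g \<eta> X Y"
  have Z_def': "Z = arg_max \<phi> (\<lambda>C. C \<in> spectraplex)"
    by (simp add: Z_def prox1_def \<phi>_def bregman_def Re_trace_mult_eq_inner_adj trace_mul_sym[of Y])
  have "continuous_on spectraplex \<phi>"
    unfolding \<phi>_def by (intro continuous_intros diff_with_grad_continuous_on[OF dg])
  then have Z: "Z \<in> spectraplex" and Z_max: "\<And>C. C \<in> spectraplex \<Longrightarrow> \<phi> C \<le> \<phi> Z"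
    unfolding Z_def' using compact_arg_max[OF compact_spectraplex] maximally_mixed_in_spectraplex
    by blast+
  then show "prox1 h g \<eta> X Y \<in> spectraplex"
    by (simp add: Z_def)
  assume C: "C \<in> spectraplex"
  have hermitian: "hermitian (g Z)" "hermitian (g X)"
    using dg Z X by (simp_all add: diff_with_grad_def)
  have "(h has_derivative (\<lambda>H. Re (trace (H ** g Z)))) (at Z within spectraplex)"
    using dg Z by (simp add: diff_with_grad_def)
  then have "(\<phi> has_derivative (\<lambda>H. inner H (adj Y) - (1 / \<eta>) * (inner H (g Z) - inner H (g X))))
      (at Z within spectraplex)"
    unfolding \<phi>_def using hermitian \<open>\<eta> > 0\<close>
    by (auto intro!: derivative_eq_intros simp: hermitian_Re_trace_mult hermitian_def)
  from convex_max_derivative_nonpos[OF convex_spectraplex Z C Z_max this]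
  have "inner (C - Z) (adj Y) \<le> (1 / \<eta>) * inner (C - Z) (g Z - g X)"
    by (simp add: inner_diff_right)
  then show "\<eta> * Re (trace (Y ** (C - prox1 h g \<eta> X Y)))
      \<le> inner (C - prox1 h g \<eta> X Y) (g (prox1 h g \<eta> X Y) - g X)"
    using \<open>\<eta> > 0\<close>
    by (simp add: Z_def[symmetric] Re_trace_mult_eq_inner_adj trace_mul_sym[of Y] field_simps)
qed

lemma joint_states_diff_herm_pairs:
  "Z \<in> joint_states \<Longrightarrow> W \<in> joint_states \<Longrightarrow> Z - W \<in> herm_pairs"
  by (auto simp: joint_states_def herm_pairs_def hermitian_diff spectraplex_hermitian)

lemma ip_eq_inner: "Y \<in> herm_pairs \<Longrightarrow> ip X Y = inner X Y"
  by (simp add: herm_pairs_def ip_def hermitian_Re_trace_mult inner_prod_def)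

lemma
  assumes dA: "diff_with_grad hA gA" and dB: "diff_with_grad hB gB" and "\<eta> > 0"
    and X: "X \<in> joint_states"
  shows prox_in_joint_states: "prox hA gA hB gB \<eta> X Y \<in> joint_states"
    and prox_variational_inequality: "C \<in> joint_states \<Longrightarrow>
      \<eta> * ip Y (C - prox hA gA hB gB \<eta> X Y)
        \<le> inner (C - prox hA gA hB gB \<eta> X Y)
            (reg_grad gA gB (prox hA gA hB gB \<eta> X Y) - reg_grad gA gB X)"
proof -
  have XA: "fst X \<in> spectraplex" and XB: "snd X \<in> spectraplex"
    using X by (auto simp: joint_states_def)
  show "prox hA gA hB gB \<eta> X Y \<in> joint_states"
    using prox1_in_spectraplex[OF dA \<open>\<eta> > 0\<close> XA] prox1_in_spectraplex[OF dB \<open>\<eta> > 0\<close> XB]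
    by (simp add: prox_def joint_states_def)
  assume "C \<in> joint_states"
  then have "fst C \<in> spectraplex" "snd C \<in> spectraplex"
    by (auto simp: joint_states_def)
  with prox1_variational_inequality[OF dA \<open>\<eta> > 0\<close> XA, of "fst C" "fst Y"]
    prox1_variational_inequality[OF dB \<open>\<eta> > 0\<close> XB, of "snd C" "snd Y"]
  show "\<eta> * ip Y (C - prox hA gA hB gB \<eta> X Y)
      \<le> inner (C - prox hA gA hB gB \<eta> X Y) (reg_grad gA gB (prox hA gA hB gB \<eta> X Y) - reg_grad gA gB X)"
    by (simp add: prox_def reg_grad_def ip_def inner_prod_def distrib_left)
qed

section \<open>Norms on Hermitian pairs\<close>

lemma is_norm_onD:
  assumes "is_norm_on nrm V" "x \<in> V"
  shows "0 \<le> nrm x" "nrm x = 0 \<longleftrightarrow> x = 0" "nrm (c *\<^sub>R x) = \<bar>c\<bar> * nrm x"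
  using assms by (simp_all add: is_norm_on_def)

lemma is_norm_on_triangle:
  "is_norm_on nrm V \<Longrightarrow> x \<in> V \<Longrightarrow> y \<in> V \<Longrightarrow> nrm (x + y) \<le> nrm x + nrm y"
  by (simp add: is_norm_on_def)

lemma is_norm_on_minus_commute:
  "is_norm_on nrm V \<Longrightarrow> x - y \<in> V \<Longrightarrow> nrm (y - x) = nrm (x - y)"
  using is_norm_onD(3)[of nrm V "x - y" "-1"] by simp

lemma is_norm_on_diff_sq_le:
  assumes "is_norm_on nrm V" "x - y \<in> V" "y - z \<in> V" "x - z \<in> V"
  shows "(nrm (x - z))\<^sup>2 \<le> 2 * (nrm (x - y))\<^sup>2 + 2 * (nrm (y - z))\<^sup>2"
proof -
  have "nrm (x - z) \<le> nrm (x - y) + nrm (y - z)"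
    using is_norm_on_triangle[OF assms(1-3)] by simp
  moreover have "0 \<le> nrm (x - z)"
    using is_norm_onD(1)[OF assms(1,4)] .
  ultimately have "(nrm (x - z))\<^sup>2 \<le> (nrm (x - y) + nrm (y - z))\<^sup>2"
    by (rule power_mono)
  also have "\<dots> \<le> 2 * (nrm (x - y))\<^sup>2 + 2 * (nrm (y - z))\<^sup>2"
    using sum_squares_bound[of "nrm (x - y)" "nrm (y - z)"] by (simp add: power2_sum)
  finally show ?thesis .
qed

lemma is_norm_on_retraction_continuous:
  fixes nrm :: "'v::real_vector \<Rightarrow> real" and p :: "'u::euclidean_space \<Rightarrow> 'v"
  assumes nrm: "is_norm_on nrm V" and p: "linear p" "range p \<subseteq> V"
  shows "continuous_on UNIV (\<lambda>x. nrm (p x))"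
proof -
  have "convex_on UNIV (\<lambda>x. nrm (p x))"
  proof (rule convex_onI)
    fix x y :: 'u and u :: real assume u: "0 < u" "u < 1"
    have in_V: "p z \<in> V" for z
      using p(2) by blast
    have "nrm (p ((1 - u) *\<^sub>R x + u *\<^sub>R y)) = nrm (p ((1 - u) *\<^sub>R x) + p (u *\<^sub>R y))"
      using p(1) by (simp add: linear_add)
    also have "\<dots> \<le> nrm (p ((1 - u) *\<^sub>R x)) + nrm (p (u *\<^sub>R y))"
      by (intro is_norm_on_triangle[OF nrm] in_V)
    also have "\<dots> = (1 - u) * nrm (p x) + u * nrm (p y)"
      using p(1) u is_norm_onD(3)[OF nrm in_V] by (simp add: linear_scale)
    finally show "nrm (p ((1 - u) *\<^sub>R x + u *\<^sub>R y)) \<le> (1 - u) * nrm (p x) + u * nrm (p y)" .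
  qed simp
  then show ?thesis
    by (rule convex_on_continuous[OF open_UNIV])
qed

lemma is_norm_on_lower_bound:
  fixes nrm :: "'v::euclidean_space \<Rightarrow> real"
  assumes nrm: "is_norm_on nrm V" and p: "linear p" "range p \<subseteq> V" "\<And>x. x \<in> V \<Longrightarrow> p x = x"
  shows "\<exists>c>0. \<forall>x\<in>V. c * norm x \<le> nrm x"
proof -
  have scale_in: "c *\<^sub>R x \<in> V" if "x \<in> V" for c x
    using p that by (metis linear_scale rangeI subsetD)
  have "V = {x. p x = x}"
    using p(2,3) by (auto simp: image_subset_iff) (metis)
  moreover have "continuous_on UNIV p"
    using p by (simp add: linear_continuous_on linear_conv_bounded_linear)
  ultimately have "closed V"
    by (simp add: closed_Collect_eq continuous_on_id)
  then have K: "compact (V \<inter> sphere 0 1)"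
    by (simp add: closed_Int_compact)
  show ?thesis
  proof (cases "V \<inter> sphere 0 1 = {}")
    case True
    have "x = 0" if "x \<in> V" for x
      using True scale_in[OF that, of "1 / norm x"] by (cases "x = 0") auto
    then have "\<forall>x\<in>V. 1 * norm x \<le> nrm x"
      using is_norm_onD(1)[OF nrm] by (metis mult_1 norm_zero)
    then show ?thesis
      by (intro exI[of _ 1]) auto
  next
    case False
    obtain x0 where x0: "x0 \<in> V \<inter> sphere 0 1" and min: "\<forall>y\<in>V \<inter> sphere 0 1. nrm (p x0) \<le> nrm (p y)"
      using continuous_attains_inf[OF K False
          continuous_on_subset[OF is_norm_on_retraction_continuous[OF nrm p(1,2)]]]
      by auto
    have "nrm x0 > 0"
      using x0 is_norm_onD(1,2)[OF nrm] by force
    moreover have "nrm x0 * norm x \<le> nrm x" if "x \<in> V" for x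
    proof (cases "x = 0")
      case False
      then have "nrm x0 \<le> nrm ((1 / norm x) *\<^sub>R x)"
        using min x0 that p(3) scale_in[OF that] by auto
      then show ?thesis
        using False that is_norm_onD(3)[OF nrm] by (simp add: field_simps)
    qed (use is_norm_onD(1)[OF nrm that] in simp)
    ultimately show ?thesis
      by blast
  qed
qed

definition hermitian_part :: "'n::finite cmat \<Rightarrow> 'n cmat" where
  "hermitian_part A = (1 / 2) *\<^sub>R (A + adj A)"

lemma linear_hermitian_part: "linear hermitian_part"
  by (rule linearI) (simp_all add: hermitian_part_def adj_add adj_scaleR algebra_simps)

lemma hermitian_hermitian_part: "hermitian (hermitian_part A)"
  by (simp add: hermitian_def hermitian_part_def adj_add adj_scaleR add.commute)

lemma hermitian_part_id: "hermitian A \<Longrightarrow> hermitian_part A = A"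
  by (simp add: hermitian_def hermitian_part_def scaleR_2[symmetric])

lemma herm_pairs_scaleR: "X \<in> herm_pairs \<Longrightarrow> c *\<^sub>R X \<in> herm_pairs"
  by (simp add: herm_pairs_def hermitian_scaleR)

lemma herm_pairs_norm_lower_bound:
  assumes "is_norm_on nrm herm_pairs"
  shows "\<exists>c>0. \<forall>X\<in>herm_pairs. c * norm X \<le> nrm X"
proof (rule is_norm_on_lower_bound[OF assms])
  show "linear (\<lambda>Z. (hermitian_part (fst Z), hermitian_part (snd Z)))"
    by (rule linearI) (simp_all add: linear_hermitian_part linear_add linear_scale)
qed (auto simp: herm_pairs_def hermitian_hermitian_part hermitian_part_id)

lemma ip_le_dual_norm:
  assumes nrm: "is_norm_on nrm herm_pairs" and W: "W \<in> herm_pairs"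
  shows "ip Y W \<le> dual_norm nrm Y * nrm W"
proof -
  obtain c where c: "c > 0" "\<forall>X\<in>herm_pairs. c * norm X \<le> nrm X"
    using herm_pairs_norm_lower_bound[OF nrm] by blast
  define B where "B = {X\<in>herm_pairs. nrm X \<le> 1}"
  have "ip Y X \<le> norm Y * (1 / c)" if "X \<in> B" for X
  proof -
    have "c * norm X \<le> 1"
      using c that by (force simp: B_def)
    then have "norm Y * norm X \<le> norm Y * (1 / c)"
      using c by (intro mult_left_mono) (simp_all add: field_simps)
    then show ?thesis
      using that norm_cauchy_schwarz[of Y X] by (simp add: B_def ip_eq_inner)
  qed
  then have bdd: "bdd_above ((\<lambda>X. ip Y X) ` B)"
    by (rule bdd_aboveI2)
  show ?thesis
  proof (cases "W = 0")
    case True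
    then show ?thesis
      using is_norm_onD(2)[OF nrm W] by (simp add: ip_def trace_def)
  next
    case False
    then have pos: "nrm W > 0"
      using is_norm_onD(1,2)[OF nrm W] by auto
    then have "(1 / nrm W) *\<^sub>R W \<in> B"
      using W is_norm_onD(3)[OF nrm W] by (simp add: B_def herm_pairs_scaleR)
    then have "ip Y ((1 / nrm W) *\<^sub>R W) \<le> dual_norm nrm Y"
      unfolding dual_norm_def B_def[symmetric] using bdd by (rule cSUP_upper)
    then show ?thesis
      using pos W herm_pairs_scaleR[OF W] by (simp add: ip_eq_inner field_simps)
  qed
qed

section \<open>The game operator\<close>

lemma trace_ptrace_A_mult: "trace (ptrace_A X ** B) = trace (X ** kron (mat 1) B)"
proof -
  have entry: "kron (mat 1) B $ q $ p = (if fst q = fst p then B $ snd q $ snd p else 0)" for p q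
    by (simp add: kron_def mat_def)
  have sum_prod: "(\<Sum>p\<in>UNIV. f p) = (\<Sum>b\<in>UNIV. \<Sum>a\<in>UNIV. f (a, b))"
    for f :: "'x::finite \<times> 'y::finite \<Rightarrow> complex"
    unfolding sum_UNIV_prod by (rule sum.swap)
  show ?thesis
    by (simp add: trace_def matrix_matrix_mult_def ptrace_A_def entry sum_prod sum_distrib_right
        if_distrib cong: if_cong)
      (rule sum.cong[OF refl], rule sum.swap)
qed

lemma Re_trace_adj_mult_hermitian: "hermitian K \<Longrightarrow> Re (trace (adj U ** K)) = Re (trace (U ** K))"
  by (metis Re_trace_mult_eq_inner_adj hermitian_def inner_adj_adj)

lemma Re_trace_uminus_mult: "Re (trace (- X ** B)) = - Re (trace (X ** B))"
  for X B :: "'n::finite cmat"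
  by (simp add: Re_trace_mult_eq_inner_adj)

lemma Re_trace_game_op_fst:
  "hermitian A \<Longrightarrow> hermitian (snd P) \<Longrightarrow> Re (trace (fst (game_op U P) ** A)) = payoff U A (snd P)"
  by (simp add: game_op_def trace_ptrace_B_mult matrix_mul_assoc[symmetric] kron_mult
      Re_trace_adj_mult_hermitian hermitian_kron payoff_def)

lemma Re_trace_game_op_snd:
  "hermitian B \<Longrightarrow> hermitian (fst P) \<Longrightarrow> Re (trace (snd (game_op U P) ** B)) = - payoff U (fst P) B"
  by (simp add: game_op_def Re_trace_uminus_mult trace_ptrace_A_mult matrix_mul_assoc[symmetric]
      kron_mult Re_trace_adj_mult_hermitian hermitian_kron payoff_def)

lemma linear_payoff_left: "linear (\<lambda>A. payoff U A B)"
  and linear_payoff_right: "linear (\<lambda>B. payoff U A B)"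
  by (rule linearI;
      simp add: payoff_def kron_def trace_def matrix_matrix_mult_def algebra_simps sum.distrib
        sum_distrib_left)+

lemma ip_game_op_eq_payoff_gap:
  assumes "Z \<in> joint_states" "P \<in> joint_states"
  shows "ip (game_op U P) (Z - P) = payoff U (fst Z) (snd P) - payoff U (fst P) (snd Z)"
proof -
  have "hermitian (fst Z)" "hermitian (snd Z)" "hermitian (fst P)" "hermitian (snd P)"
    using assms by (auto simp: joint_states_def spectraplex_hermitian)
  then show ?thesis
    by (simp add: ip_def Re_trace_game_op_fst Re_trace_game_op_snd hermitian_diff
        linear_diff[OF linear_payoff_left] linear_diff[OF linear_payoff_right])
qed

definition bregman_div :: "('v::real_inner \<Rightarrow> real) \<Rightarrow> ('v \<Rightarrow> 'v) \<Rightarrow> 'v \<Rightarrow> 'v \<Rightarrow> real" where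
  "bregman_div h g x y = h x - h y - inner (x - y) (g y)"

lemma bregman_div_three_point:
  "inner (z - y) (g y - g x) = bregman_div h g z x - bregman_div h g z y - bregman_div h g y x"
  by (simp add: bregman_div_def inner_diff_left inner_diff_right)

lemma bregman_div_add_swap:
  "bregman_div h g x y + bregman_div h g y x = inner (x - y) (g x - g y)"
  by (simp add: bregman_div_def inner_diff_left inner_diff_right)

section \<open>Convergence of optimistic matrix mirror prox\<close>

lemma self_bounded_le_quarter_sq:
  fixes \<mu> b d e :: real
  assumes "0 < \<mu>" "0 \<le> b" "\<mu> * b\<^sup>2 \<le> e" "e \<le> \<mu> / 2 * d * b"
  shows "e \<le> \<mu> / 4 * d\<^sup>2"
proof (cases "b = 0")
  case True
  then show ?thesis
    using assms by simp
next
  case False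
  then have pos: "b > 0"
    using assms(2) by simp
  have "\<mu> * b\<^sup>2 \<le> \<mu> / 2 * d * b"
    using assms(3,4) by linarith
  then have "(\<mu> * b) * b \<le> (\<mu> * (d / 2)) * b"
    by (simp add: power2_eq_square mult_ac)
  then have "\<mu> * b \<le> \<mu> * (d / 2)"
    using pos by (rule mult_right_le_imp_le)
  then have b: "b \<le> d / 2"
    using assms(1) by (rule mult_left_le_imp_le)
  then have "\<mu> / 2 * d * b \<le> \<mu> / 2 * d * (d / 2)"
    using assms(1,2) by (intro mult_left_mono) auto
  with assms(4) have "e \<le> \<mu> / 2 * d * (d / 2)"
    by (rule order.trans)
  also have "\<dots> = \<mu> / 4 * d\<^sup>2"
    by (simp add: power2_eq_square)
  finally show ?thesis .
qed

lemma cSUP_minus_cINF_le: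
  fixes f :: "'a \<Rightarrow> real" and g :: "'b \<Rightarrow> real"
  assumes "A \<noteq> {}" "B \<noteq> {}" "\<And>a b. a \<in> A \<Longrightarrow> b \<in> B \<Longrightarrow> f a - g b \<le> e"
  shows "(SUP a\<in>A. f a) - (INF b\<in>B. g b) \<le> e"
proof -
  have "(SUP a\<in>A. f a) \<le> (INF b\<in>B. g b) + e"
  proof (rule cSUP_least[OF assms(1)])
    fix a assume "a \<in> A"
    then have "f a - e \<le> (INF b\<in>B. g b)"
      using assms(3) by (intro cINF_greatest[OF assms(2)]) force
    then show "f a \<le> (INF b\<in>B. g b) + e"
      by simp
  qed
  then show ?thesis
    by simp
qed

declare ommp.simps(2) [simp del]

locale ommp_game =
  fixes U :: "('a::finite \<times> 'b::finite) cmat"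
    and hA :: "'a cmat \<Rightarrow> real" and gA :: "'a cmat \<Rightarrow> 'a cmat"
    and hB :: "'b cmat \<Rightarrow> real" and gB :: "'b cmat \<Rightarrow> 'b cmat"
    and nrm :: "('a cmat \<times> 'b cmat) \<Rightarrow> real"
    and \<mu> \<gamma> :: real
  assumes nrm: "is_norm_on nrm herm_pairs"
    and diff_A: "diff_with_grad hA gA" and diff_B: "diff_with_grad hB gB"
    and \<mu>_pos: "\<mu> > 0"
    and strongly_convex: "strongly_convex_wrt (reg hA hB) (reg_grad gA gB) nrm \<mu>"
    and \<gamma>_pos: "\<gamma> > 0"
    and lipschitz: "\<forall>Z\<in>joint_states. \<forall>Z'\<in>joint_states.
      dual_norm nrm (game_op U Z - game_op U Z') \<le> \<gamma> * nrm (Z - Z')"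
begin

abbreviation "\<eta> \<equiv> \<mu> / (2 * \<gamma>)"
abbreviation "F \<equiv> game_op U"
abbreviation "G \<equiv> reg_grad gA gB"
abbreviation "D \<equiv> bregman_div (reg hA hB) G"
abbreviation "prox_step \<equiv> prox hA gA hB gB \<eta>"
abbreviation "Psi t \<equiv> fst (ommp U hA gA hB gB \<eta> t)"
abbreviation "Psi_hat t \<equiv> snd (ommp U hA gA hB gB \<eta> t)"
abbreviation "Psi_avg N \<equiv> ommp_avg U hA gA hB gB \<eta> N"

lemma step_size_pos: "\<eta> > 0"
  using \<mu>_pos \<gamma>_pos by simp

lemma prox_step_in_joint_states: "X \<in> joint_states \<Longrightarrow> prox_step X Y \<in> joint_states"
  by (rule prox_in_joint_states[OF diff_A diff_B step_size_pos])

lemma prox_step_inequality: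
  assumes "X \<in> joint_states" "C \<in> joint_states"
  shows "\<eta> * inner Y (C - prox_step X Y) \<le> inner (C - prox_step X Y) (G (prox_step X Y) - G X)"
  using prox_variational_inequality[OF diff_A diff_B step_size_pos assms]
    ip_eq_inner[OF joint_states_diff_herm_pairs[OF assms(2) prox_step_in_joint_states[OF assms(1)]]]
  by simp

lemma bregman_div_ge_sq_nrm:
  assumes "X \<in> joint_states" "Y \<in> joint_states"
  shows "\<mu> / 2 * (nrm (X - Y))\<^sup>2 \<le> D X Y"
proof -
  have "G Y \<in> herm_pairs"
    using diff_A diff_B assms(2)
    by (auto simp: diff_with_grad_def reg_grad_def herm_pairs_def joint_states_def)
  moreover have "reg hA hB Y + ip (X - Y) (G Y) + \<mu> / 2 * (nrm (X - Y))\<^sup>2 \<le> reg hA hB X"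
    using strongly_convex assms unfolding strongly_convex_wrt_def by blast
  ultimately show ?thesis
    by (simp add: bregman_div_def ip_eq_inner)
qed

lemma optimistic_step_stability:
  assumes X: "X \<in> joint_states" and Xh: "Xh \<in> joint_states"
    and P_eq: "P = prox_step Xh (F X)" and Q_eq: "Q = prox_step Xh (F P)"
  shows "\<eta> * inner (F P - F X) (Q - P) \<le> \<mu> / 4 * (nrm (P - X))\<^sup>2"
proof -
  have P: "P \<in> joint_states" and Q: "Q \<in> joint_states"
    unfolding P_eq Q_eq using Xh by (simp_all add: prox_step_in_joint_states)
  have QP: "Q - P \<in> herm_pairs"
    using P Q by (simp add: joint_states_diff_herm_pairs)
  have "\<mu> * (nrm (Q - P))\<^sup>2 \<le> D Q P + D P Q"
    using bregman_div_ge_sq_nrm[OF P Q] bregman_div_ge_sq_nrm[OF Q P]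
      is_norm_on_minus_commute[OF nrm QP] by simp
  also have "\<dots> = inner (Q - P) (G Q - G P)"
    by (rule bregman_div_add_swap)
  \<comment> \<open>Both prox steps start from \<open>Xh\<close>, so adding their optimality conditions at
    \<open>Q\<close> and at \<open>P\<close> cancels the gradient at the centre.\<close>
  also have "\<dots> \<le> \<eta> * inner (F P - F X) (Q - P)"
    using prox_step_inequality[OF Xh Q, of "F X"] prox_step_inequality[OF Xh P, of "F P"]
    unfolding P_eq[symmetric] Q_eq[symmetric]
    by (simp add: inner_diff_left inner_diff_right algebra_simps)
  finally have self_bound: "\<mu> * (nrm (Q - P))\<^sup>2 \<le> \<eta> * inner (F P - F X) (Q - P)" .
  have "inner (F P - F X) (Q - P) \<le> dual_norm nrm (F P - F X) * nrm (Q - P)"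
    using ip_le_dual_norm[OF nrm QP] by (simp add: ip_eq_inner[OF QP])
  also have "\<dots> \<le> \<gamma> * nrm (P - X) * nrm (Q - P)"
    using lipschitz P X is_norm_onD(1)[OF nrm QP] by (intro mult_right_mono) auto
  finally have "\<eta> * inner (F P - F X) (Q - P) \<le> \<eta> * (\<gamma> * nrm (P - X) * nrm (Q - P))"
    using step_size_pos by (intro mult_left_mono) auto
  also have "\<dots> = \<mu> / 2 * nrm (P - X) * nrm (Q - P)"
    using \<gamma>_pos by simp
  finally have "\<eta> * inner (F P - F X) (Q - P) \<le> \<mu> / 2 * nrm (P - X) * nrm (Q - P)" .
  with self_bound show ?thesis
    using \<mu>_pos is_norm_onD(1)[OF nrm QP] by (rule self_bounded_le_quarter_sq[rotated 2])
qed

lemma optimistic_step_potential_decrease: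
  assumes X: "X \<in> joint_states" and Xh: "Xh \<in> joint_states" and Z: "Z \<in> joint_states"
    and P_eq: "P = prox_step Xh (F X)" and Q_eq: "Q = prox_step Xh (F P)"
  shows "\<eta> * inner (F P) (Z - P)
    \<le> (D Z Xh + \<mu> / 2 * (nrm (Xh - X))\<^sup>2) - (D Z Q + \<mu> / 2 * (nrm (Q - P))\<^sup>2)"
proof -
  have P: "P \<in> joint_states" and Q: "Q \<in> joint_states"
    unfolding P_eq Q_eq using Xh by (simp_all add: prox_step_in_joint_states)
  have VI_P: "\<eta> * inner (F X) (Q - P) \<le> D Q Xh - D Q P - D P Xh"
    using prox_step_inequality[OF Xh Q, of "F X"] bregman_div_three_point[of Q P G Xh]
    unfolding P_eq[symmetric] by simp
  have VI_Q: "\<eta> * inner (F P) (Z - Q) \<le> D Z Xh - D Z Q - D Q Xh"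
    using prox_step_inequality[OF Xh Z, of "F P"] bregman_div_three_point[of Z Q G Xh]
    unfolding Q_eq[symmetric] by simp
  have split: "\<eta> * inner (F P) (Z - P)
      = \<eta> * inner (F P) (Z - Q) + \<eta> * inner (F X) (Q - P) + \<eta> * inner (F P - F X) (Q - P)"
    by (simp add: inner_diff_left inner_diff_right algebra_simps)
  have "(nrm (P - X))\<^sup>2 \<le> 2 * (nrm (P - Xh))\<^sup>2 + 2 * (nrm (Xh - X))\<^sup>2"
    using P X Xh by (intro is_norm_on_diff_sq_le[OF nrm] joint_states_diff_herm_pairs)
  then have "\<mu> / 4 * (nrm (P - X))\<^sup>2 \<le> \<mu> / 4 * (2 * (nrm (P - Xh))\<^sup>2 + 2 * (nrm (Xh - X))\<^sup>2)"
    using \<mu>_pos by (intro mult_left_mono) auto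
  also have "\<dots> = \<mu> / 2 * (nrm (P - Xh))\<^sup>2 + \<mu> / 2 * (nrm (Xh - X))\<^sup>2"
    by (simp add: algebra_simps)
  finally show ?thesis
    using split VI_P VI_Q optimistic_step_stability[OF X Xh P_eq Q_eq]
      bregman_div_ge_sq_nrm[OF Q P] bregman_div_ge_sq_nrm[OF P Xh]
    by linarith
qed

lemma Psi_Suc: "Psi (Suc t) = prox_step (Psi_hat t) (F (Psi t))"
  and Psi_hat_Suc: "Psi_hat (Suc t) = prox_step (Psi_hat t) (F (Psi (Suc t)))"
  by (simp_all add: ommp.simps(2) Let_def split_beta)

lemma iterates_in_joint_states: "Psi t \<in> joint_states" "Psi_hat t \<in> joint_states"
proof (induction t)
  case 0
  show "Psi 0 \<in> joint_states" "Psi_hat 0 \<in> joint_states"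
    by (simp_all add: joint_states_def maximally_mixed_in_spectraplex)
next
  case (Suc t)
  then show "Psi (Suc t) \<in> joint_states" "Psi_hat (Suc t) \<in> joint_states"
    unfolding Psi_Suc Psi_hat_Suc by (simp_all add: prox_step_in_joint_states)
qed

definition potential :: "'a cmat \<times> 'b cmat \<Rightarrow> nat \<Rightarrow> real" where
  "potential Z t = D Z (Psi_hat t) + \<mu> / 2 * (nrm (Psi_hat t - Psi t))\<^sup>2"

lemma potential_decrease:
  assumes "Z \<in> joint_states"
  shows "\<eta> * ip (F (Psi (Suc t))) (Z - Psi (Suc t)) \<le> potential Z t - potential Z (Suc t)"
  using optimistic_step_potential_decrease[OF iterates_in_joint_states assms Psi_Suc Psi_hat_Suc]
    ip_eq_inner[OF joint_states_diff_herm_pairs[OF assms iterates_in_joint_states(1)[of "Suc t"]]]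
  by (simp add: potential_def)

lemma sum_ip_game_op_le:
  assumes Z: "Z \<in> joint_states"
  shows "(\<Sum>t<Suc M. ip (F (Psi t)) (Z - Psi t)) \<le> ip (F (Psi 0)) (Z - Psi 0) + D Z (Psi_hat 0) / \<eta>"
proof -
  have "\<eta> * (\<Sum>t<M. ip (F (Psi (Suc t))) (Z - Psi (Suc t))) \<le> (\<Sum>t<M. potential Z t - potential Z (Suc t))"
    unfolding sum_distrib_left by (intro sum_mono potential_decrease Z)
  also have "\<dots> = potential Z 0 - potential Z M"
    by (rule sum_lessThan_telescope')
  also have "\<dots> \<le> D Z (Psi_hat 0)"
  proof -
    have sq_nonneg: "0 \<le> \<mu> / 2 * (nrm W)\<^sup>2" for W
      using \<mu>_pos by simp
    then have "0 \<le> potential Z M"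
      using bregman_div_ge_sq_nrm[OF Z iterates_in_joint_states(2), of M]
      unfolding potential_def by (meson add_nonneg_nonneg order_trans)
    moreover have "potential Z 0 = D Z (Psi_hat 0)"
      using is_norm_onD(2)[OF nrm, of 0] by (simp add: potential_def herm_pairs_def hermitian_0)
    ultimately show ?thesis
      by simp
  qed
  finally have "(\<Sum>t<M. ip (F (Psi (Suc t))) (Z - Psi (Suc t))) * \<eta> \<le> D Z (Psi_hat 0)"
    by (simp only: mult.commute)
  then have "(\<Sum>t<M. ip (F (Psi (Suc t))) (Z - Psi (Suc t))) \<le> D Z (Psi_hat 0) / \<eta>"
    using step_size_pos by (simp only: pos_le_divide_eq)
  then show ?thesis
    unfolding sum.lessThan_Suc_shift by simp
qed

lemma continuous_on_reg: "continuous_on joint_states (reg hA hB)"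
proof -
  have "continuous_on joint_states (\<lambda>Z. hA (fst Z))" "continuous_on joint_states (\<lambda>Z. hB (snd Z))"
    by (auto intro!: continuous_on_compose2[OF diff_with_grad_continuous_on[OF diff_A]]
        continuous_on_compose2[OF diff_with_grad_continuous_on[OF diff_B]] continuous_intros
        simp: joint_states_def)
  then show ?thesis
    unfolding reg_def by (intro continuous_intros)
qed

lemma initial_term_bounded:
  "\<exists>K. \<forall>Z\<in>joint_states. ip (F (Psi 0)) (Z - Psi 0) + D Z (Psi_hat 0) / \<eta> \<le> K"
proof -
  have "continuous_on joint_states (\<lambda>Z. ip (F (Psi 0)) (Z - Psi 0) + D Z (Psi_hat 0) / \<eta>)"
    unfolding ip_def bregman_div_def trace_def matrix_matrix_mult_def using step_size_pos
    by (intro continuous_intros continuous_on_reg) auto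
  moreover have "compact (joint_states :: ('a cmat \<times> 'b cmat) set)"
    by (simp add: joint_states_def compact_Times compact_spectraplex)
  ultimately have "bounded ((\<lambda>Z. ip (F (Psi 0)) (Z - Psi 0) + D Z (Psi_hat 0) / \<eta>) ` joint_states)"
    by (intro compact_imp_bounded compact_continuous_image)
  then show ?thesis
    by (auto simp: bounded_iff abs_le_iff)
qed

lemma ommp_avg_in_joint_states:
  assumes "N > 0"
  shows "Psi_avg N \<in> joint_states"
proof -
  have "(\<Sum>t<N. (1 / real N) *\<^sub>R Psi t) \<in> joint_states"
    using assms iterates_in_joint_states
    by (intro convex_sum) (auto simp: joint_states_def convex_Times convex_spectraplex)
  then show ?thesis
    by (simp add: ommp_avg_def scaleR_sum_right)
qed

lemma payoff_gap_ommp_avg: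
  assumes "al \<in> spectraplex" "be \<in> spectraplex"
  shows "payoff U al (snd (Psi_avg N)) - payoff U (fst (Psi_avg N)) be
    = (1 / real N) * (\<Sum>t<N. ip (F (Psi t)) ((al, be) - Psi t))"
proof -
  have "ip (F (Psi t)) ((al, be) - Psi t) = payoff U al (snd (Psi t)) - payoff U (fst (Psi t)) be" for t
    using assms iterates_in_joint_states(1)
    by (simp add: ip_game_op_eq_payoff_gap joint_states_def)
  then show ?thesis
    by (simp add: ommp_avg_def fst_sum snd_sum sum_subtractf right_diff_distrib
        linear_sum[OF linear_payoff_left] linear_sum[OF linear_payoff_right]
        linear_scale[OF linear_payoff_left] linear_scale[OF linear_payoff_right])
qed

theorem ommp_eps_nash:
  "\<exists>C>0. \<forall>\<epsilon>>0. \<forall>N::nat. real N \<ge> C / \<epsilon> \<longrightarrow> is_eps_nash U \<epsilon> (Psi_avg N)"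
proof -
  obtain K where K: "\<forall>Z\<in>joint_states. ip (F (Psi 0)) (Z - Psi 0) + D Z (Psi_hat 0) / \<eta> \<le> K"
    using initial_term_bounded by blast
  define C where "C = max K 1"
  have "is_eps_nash U \<epsilon> (Psi_avg N)" if \<epsilon>: "\<epsilon> > 0" and N: "real N \<ge> C / \<epsilon>" for \<epsilon> N
  proof -
    have "C / \<epsilon> > 0"
      using \<epsilon> by (simp add: C_def)
    then obtain M where M: "N = Suc M"
      using N by (cases N) auto
    have gap: "payoff U al (snd (Psi_avg N)) - payoff U (fst (Psi_avg N)) be \<le> \<epsilon>"
      if "al \<in> spectraplex" "be \<in> spectraplex" for al be
    proof -
      have "(\<Sum>t<N. ip (F (Psi t)) ((al, be) - Psi t)) \<le> C"
        using sum_ip_game_op_le[of "(al, be)" M] K that by (force simp: M C_def joint_states_def)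
      then have "(1 / real N) * (\<Sum>t<N. ip (F (Psi t)) ((al, be) - Psi t)) \<le> C / real N"
        by (simp add: M divide_right_mono)
      also have "\<dots> \<le> \<epsilon>"
        using N \<epsilon> by (simp add: M field_simps)
      finally show ?thesis
        using payoff_gap_ommp_avg[OF that] by simp
    qed
    have "duality_gap U (Psi_avg N) \<le> \<epsilon>"
      unfolding duality_gap_def
      by (rule cSUP_minus_cINF_le) (use gap maximally_mixed_in_spectraplex in auto)
    then show ?thesis
      by (simp add: is_eps_nash_def M ommp_avg_in_joint_states)
  qed
  moreover have "C > 0"
    by (simp add: C_def)
  ultimately show ?thesis
    by blast
qed

end

theorem mainTheorem1:
  fixes P :: "'w::finite \<Rightarrow> ('a::finite \<times> 'b::finite) cmat"
    and u :: "'w \<Rightarrow> real"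
    and n m :: nat
    and hA :: "'a cmat \<Rightarrow> real" and gA :: "'a cmat \<Rightarrow> 'a cmat"
    and hB :: "'b cmat \<Rightarrow> real" and gB :: "'b cmat \<Rightarrow> 'b cmat"
    and nrm :: "('a cmat \<times> 'b cmat) \<Rightarrow> real"
    and \<mu> \<gamma> :: real
  assumes "CARD('a) = 2 ^ n" and "CARD('b) = 2 ^ m"
    and "is_povm P"
    and "\<forall>w. \<bar>u w\<bar> \<le> 1"
    and "is_norm_on nrm herm_pairs"
    and "diff_with_grad hA gA" and "diff_with_grad hB gB"
    and "\<mu> > 0"
    and "strongly_convex_wrt (reg hA hB) (reg_grad gA gB) nrm \<mu>"
    and "\<gamma> > 0"
    and "\<forall>Z\<in>joint_states. \<forall>Z'\<in>joint_states.
           dual_norm nrm (game_op (payoff_obs P u) Z - game_op (payoff_obs P u) Z')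
             \<le> \<gamma> * nrm (Z - Z')"
  shows "\<exists>C>0. \<forall>\<epsilon>>0. \<forall>N::nat. real N \<ge> C / \<epsilon> \<longrightarrow>
           is_eps_nash (payoff_obs P u) \<epsilon>
             (ommp_avg (payoff_obs P u) hA gA hB gB (\<mu> / (2 * \<gamma>)) N)"
proof -
  interpret ommp_game "payoff_obs P u" hA gA hB gB nrm \<mu> \<gamma>
    by unfold_locales (fact assms)+
  show ?thesis
    by (rule ommp_eps_nash)
qed

end
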